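(* For every $n$, the set $\mathrm{Rect}^\ast(n)=\{(a^b): ab=n,\ a,b\ge 2\}$ of nontrivial rectangular partitions of $n$ is an independent set in the partition graph $G_n$; that is, no two distinct nontrivial rectangular partitions of $n$ are adjacent.
   Context: The partition graph $G_n$ has as vertices the integer partitions of $n$; two partitions are adjacent if one is obtained from the other by a single elementary unit transfer followed by reordering: decrease one part by $1$ and either increase a different part by $1$ or create a new part equal to $1$, then delete a part that became $0$ and sort in nonincreasing order (the result being different from the original). $(a^b)$ denotes the partition with $b$ parts all equal to $a$. *)

theory Defs
  imports Main
begin

text \<open>Partitions of n are represented as nonincreasing lists of positive naturals summing to n.\<close>

definition is_partition :: "nat \<Rightarrow> nat list \<Rightarrow> bool" where
  "is_partition n p \<longleftrightarrow> sorted (rev p) \<and> (\<forall>x\<in>set p. 0 < x) \<and> sum_list p = n"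

definition normalize :: "nat list \<Rightarrow> nat list" where
  "normalize q = rev (sort (filter (\<lambda>x. x \<noteq> 0) q))"

definition unit_transfer :: "nat list \<Rightarrow> nat list \<Rightarrow> bool" where
  "unit_transfer p q \<longleftrightarrow>
     (\<exists>i < length p. 0 < p ! i \<and>
        ((\<exists>j < length p. j \<noteq> i \<and> q = normalize ((p[i := p ! i - 1])[j := p ! j + 1]))
         \<or> q = normalize (p[i := p ! i - 1] @ [1])))"

definition adjacent :: "nat \<Rightarrow> nat list \<Rightarrow> nat list \<Rightarrow> bool" where
  "adjacent n p q \<longleftrightarrow> is_partition n p \<and> is_partition n q \<and> p \<noteq> q \<and>
     (unit_transfer p q \<or> unit_transfer q p)"

definition rect :: "nat \<Rightarrow> nat \<Rightarrow> nat list" where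
  "rect a b = replicate b a"

definition Rect_star :: "nat \<Rightarrow> nat list set" where
  "Rect_star n = {rect a b | a b. a * b = n \<and> 2 \<le> a \<and> 2 \<le> b}"

end

theory Submission
  imports Defs
begin

(* A unit transfer out of (a^b) either moves a unit between two parts, creating parts
   a - 1 > 0 and a + 1, or splits off a new part 1 while another part a > 1 survives
   (as b > 1).  Either way the result has two different part sizes, so it is not
   rectangular; since adjacency is a unit transfer in one direction or the other,
   no two rectangles are adjacent. *)

lemma set_normalize: "set (normalize q) = set q - {0}"
  unfolding normalize_def by auto

lemma unit_transfer_rect_two_part_sizes:
  assumes "unit_transfer (rect a b) q" and "2 \<le> a" and "2 \<le> b"
  obtains x y where "x \<in> set q" and "y \<in> set q" and "x \<noteq> y"
proof -
  let ?p = "replicate b a"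
  obtain i where i: "i < b" and
    transfer: "(\<exists>j < b. j \<noteq> i \<and> q = normalize ((?p[i := ?p ! i - 1])[j := ?p ! j + 1]))
      \<or> q = normalize (?p[i := ?p ! i - 1] @ [1])"
    using assms(1) unfolding unit_transfer_def rect_def length_replicate by blast
  from transfer consider
      (move) j where "j < b" "j \<noteq> i" "q = normalize ((?p[i := a - 1])[j := a + 1])"
    | (split) "q = normalize (?p[i := a - 1] @ [1])"
    using i by auto
  then show ?thesis
  proof cases
    case move
    let ?l = "(?p[i := a - 1])[j := a + 1]"
    have "?l ! i \<in> set ?l" "?l ! j \<in> set ?l"
      using i move(1) by (simp_all del: nth_list_update_eq nth_list_update_neq)
    then have "a - 1 \<in> set ?l" "a + 1 \<in> set ?l"
      using i move(1,2) by simp_all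
    then have "a - 1 \<in> set q" "a + 1 \<in> set q"
      using move(3) assms(2) by (simp_all add: set_normalize)
    then show ?thesis
      using that[of "a - 1" "a + 1"] by simp
  next
    case split
    let ?l = "?p[i := a - 1] @ [1]"
    define k where "k = (if i = 0 then 1 else 0 :: nat)"
    have k: "k < b" "k \<noteq> i"
      using assms(3) k_def by auto
    then have "?l ! k = a"
      by (simp add: nth_append)
    moreover have "?l ! k \<in> set ?l"
      using k by (intro nth_mem) simp
    ultimately have "a \<in> set q" "1 \<in> set q"
      using split assms(2) by (simp_all add: set_normalize)
    then show ?thesis
      using that[of a 1] assms(2) by simp
  qed
qed

lemma unit_transfer_rect_not_rect:
  assumes "unit_transfer (rect a b) q" and "2 \<le> a" and "2 \<le> b"
  shows "q \<noteq> rect c d"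
proof
  assume "q = rect c d"
  then have "x = c" if "x \<in> set q" for x
    using that by (cases "d = 0") (simp_all add: rect_def)
  then show False
    using unit_transfer_rect_two_part_sizes[OF assms] by metis
qed

theorem proposition3p5:
  fixes n :: nat
  shows "\<forall>p\<in>Rect_star n. \<forall>q\<in>Rect_star n. \<not> adjacent n p q"
proof (intro ballI notI)
  fix p q
  assume "p \<in> Rect_star n" and "q \<in> Rect_star n" and "adjacent n p q"
  then obtain a b c d where "p = rect a b" "2 \<le> a" "2 \<le> b"
    and "q = rect c d" "2 \<le> c" "2 \<le> d"
    and "unit_transfer p q \<or> unit_transfer q p"
    unfolding Rect_star_def adjacent_def by blast
  then show False
    using unit_transfer_rect_not_rect by blast
qed

end
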